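(* Let $\mathscr{A}$ be a finite alphabet and let $\Xi\subseteq\mathscr{A}^{\mathbb{Z}}$ be a subshift containing a non-periodic element. Then for every $k\in\mathbb{N}$ the GAP-graph $\mathscr{G}_k(\Xi)$ has at least one branching vertex.
   Context: $\mathscr{A}^{\mathbb{Z}}$ has the product topology and shift $(T\xi)(j)=\xi(j-1)$; a subshift is a non-empty closed $T$-invariant subset; $\xi$ is periodic if $T^n\xi=\xi$ for some $n\geq1$. $\mathcal{D}(\Xi)$ is the set of finite subwords of elements of $\Xi$. The GAP-graph $\mathscr{G}_k(\Xi)$ has vertex set $\mathcal{D}(\Xi)\cap\mathscr{A}^k$, edge set $\mathcal{D}(\Xi)\cap\mathscr{A}^{k+1}$, the edge $a_0\cdots a_k$ going from $a_0\cdots a_{k-1}$ to $a_1\cdots a_k$. A vertex $u$ is branching if more than one edge starts at $u$ or more than one edge ends at $u$. *)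

theory Defs
  imports "HOL-Analysis.Analysis"
begin

definition shift_top :: "(int \<Rightarrow> 'a) topology" where
  "shift_top = product_topology (\<lambda>_::int. discrete_topology (UNIV::'a set)) UNIV"

definition shiftT :: "(int \<Rightarrow> 'a) \<Rightarrow> (int \<Rightarrow> 'a)" where
  "shiftT \<xi> = (\<lambda>j. \<xi> (j - 1))"

definition subshift :: "(int \<Rightarrow> 'a) set \<Rightarrow> bool" where
  "subshift X \<longleftrightarrow> X \<noteq> {} \<and> closedin shift_top X \<and> shiftT ` X = X"

definition periodic :: "(int \<Rightarrow> 'a) \<Rightarrow> bool" where
  "periodic \<xi> \<longleftrightarrow> (\<exists>n::nat. n \<ge> 1 \<and> (shiftT ^^ n) \<xi> = \<xi>)"

definition subword :: "(int \<Rightarrow> 'a) \<Rightarrow> int \<Rightarrow> nat \<Rightarrow> 'a list" where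
  "subword \<xi> j n = map (\<lambda>i. \<xi> (j + int i)) [0..<n]"

definition dict :: "(int \<Rightarrow> 'a) set \<Rightarrow> 'a list set" where
  "dict X = {w. \<exists>\<xi>\<in>X. \<exists>j. w = subword \<xi> j (length w)}"

definition gap_vertices :: "(int \<Rightarrow> 'a) set \<Rightarrow> nat \<Rightarrow> 'a list set" where
  "gap_vertices X k = {w \<in> dict X. length w = k}"

definition gap_edges :: "(int \<Rightarrow> 'a) set \<Rightarrow> nat \<Rightarrow> 'a list set" where
  "gap_edges X k = {w \<in> dict X. length w = Suc k}"

definition edge_source :: "nat \<Rightarrow> 'a list \<Rightarrow> 'a list" where
  "edge_source k e = take k e"

definition edge_target :: "'a list \<Rightarrow> 'a list" where
  "edge_target e = drop 1 e"

definition branching :: "(int \<Rightarrow> 'a) set \<Rightarrow> nat \<Rightarrow> 'a list \<Rightarrow> bool" where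
  "branching X k u \<longleftrightarrow> u \<in> gap_vertices X k \<and>
     (card {e \<in> gap_edges X k. edge_source k e = u} > 1 \<or>
      card {e \<in> gap_edges X k. edge_target e = u} > 1)"

end

theory Submission
  imports Defs
begin

text \<open>Without branching vertices every vertex of the GAP-graph has at most one outgoing and at
  most one incoming edge. For any element xi of the subshift, the edges e(j) = xi(j) ... xi(j+k)
  form a bi-infinite walk in that graph, so e(i) = e(j) forces e(i+1) = e(j+1) and e(i-1) = e(j-1).
  There are finitely many edges, hence some edge repeats and the walk, and with it xi, is periodic.\<close>

lemma length_subword [simp]: "length (subword \<xi> j n) = n"
  by (simp add: subword_def)

lemma subword_in_dict: "\<xi> \<in> X \<Longrightarrow> subword \<xi> j n \<in> dict X"
  unfolding dict_def by auto

lemma take_subword: "m \<le> n \<Longrightarrow> take m (subword \<xi> j n) = subword \<xi> j m"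
  unfolding subword_def by (simp add: take_map)

lemma drop_one_subword: "drop 1 (subword \<xi> j (Suc n)) = subword \<xi> (j + 1) n"
  unfolding subword_def by (simp add: drop_map map_upt_Suc algebra_simps del: upt_Suc)

lemma hd_subword: "hd (subword \<xi> j (Suc n)) = \<xi> j"
  unfolding subword_def by (simp del: upt_Suc add: upt_conv_Cons)

lemma funpow_shiftT: "(shiftT ^^ n) \<xi> = (\<lambda>j. \<xi> (j - int n))"
  by (induction n) (auto simp: shiftT_def algebra_simps)

lemma periodic_iff: "periodic \<xi> \<longleftrightarrow> (\<exists>p::nat. p > 0 \<and> (\<forall>j. \<xi> (j + int p) = \<xi> j))"
proof -
  have "(shiftT ^^ p) \<xi> = \<xi> \<longleftrightarrow> (\<forall>j. \<xi> (j + int p) = \<xi> j)" for p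
  proof
    assume "(shiftT ^^ p) \<xi> = \<xi>"
    then have "\<xi> (j + int p - int p) = \<xi> (j + int p)" for j
      unfolding funpow_shiftT fun_eq_iff by blast
    then show "\<forall>j. \<xi> (j + int p) = \<xi> j" by simp
  qed (simp add: funpow_shiftT fun_eq_iff, metis diff_add_cancel)
  then show ?thesis
    unfolding periodic_def by (auto simp: Suc_le_eq)
qed

lemma finite_gap_edges: "finite (gap_edges (X :: (int \<Rightarrow> 'a::finite) set) k)"
proof (rule finite_subset)
  show "gap_edges X k \<subseteq> {w. length w = Suc k}"
    unfolding gap_edges_def by auto
  show "finite {w :: 'a list. length w = Suc k}"
    using finite_lists_length_eq[of "UNIV :: 'a set"] by simp
qed

lemma unique_edge_from_if_not_branching:
  fixes X :: "(int \<Rightarrow> 'a::finite) set"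
  assumes "u \<in> gap_vertices X k" "\<not> branching X k u"
    and "e \<in> gap_edges X k" "e' \<in> gap_edges X k"
    and "edge_source k e = u" "edge_source k e' = u"
  shows "e = e'"
proof -
  have "card {e \<in> gap_edges X k. edge_source k e = u} \<le> 1"
    using assms(1,2) unfolding branching_def by simp
  then show ?thesis
    using assms(3-) finite_gap_edges[of X k] by (auto simp: card_le_Suc0_iff_eq)
qed

lemma unique_edge_into_if_not_branching:
  fixes X :: "(int \<Rightarrow> 'a::finite) set"
  assumes "u \<in> gap_vertices X k" "\<not> branching X k u"
    and "e \<in> gap_edges X k" "e' \<in> gap_edges X k"
    and "edge_target e = u" "edge_target e' = u"
  shows "e = e'"
proof -
  have "card {e \<in> gap_edges X k. edge_target e = u} \<le> 1"
    using assms(1,2) unfolding branching_def by simp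
  then show ?thesis
    using assms(3-) finite_gap_edges[of X k] by (auto simp: card_le_Suc0_iff_eq)
qed

lemma equal_values_propagate:
  fixes s :: "int \<Rightarrow> 'b"
  assumes fwd: "\<And>i j. s i = s j \<Longrightarrow> s (i + 1) = s (j + 1)"
    and bwd: "\<And>i j. s i = s j \<Longrightarrow> s (i - 1) = s (j - 1)"
    and "s i = s j"
  shows "s (i + m) = s (j + m)"
proof (induction m rule: int_induct[where k = 0])
  case base
  then show ?case using assms(3) by simp
next
  case (step1 m)
  then show ?case using fwd[of "i + m" "j + m"] by (simp add: add.assoc)
next
  case (step2 m)
  then show ?case using bwd[of "i + m" "j + m"] by (simp add: algebra_simps)
qed

lemma periodic_if_finite_range_and_equal_values_propagate:
  fixes s :: "int \<Rightarrow> 'b"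
  assumes "finite (range s)"
    and "\<And>i j. s i = s j \<Longrightarrow> s (i + 1) = s (j + 1)"
    and "\<And>i j. s i = s j \<Longrightarrow> s (i - 1) = s (j - 1)"
  shows "\<exists>p::nat. p > 0 \<and> (\<forall>i. s (i + int p) = s i)"
proof -
  have "\<not> inj (\<lambda>n::nat. s (int n))"
  proof
    assume "inj (\<lambda>n::nat. s (int n))"
    moreover have "finite (range (\<lambda>n::nat. s (int n)))"
      using assms(1) by (rule finite_subset[rotated]) auto
    ultimately show False
      using finite_imageD by blast
  qed
  then obtain a b :: nat where "a < b" "s (int a) = s (int b)"
    unfolding inj_def by (metis linorder_neqE_nat)
  have "s (i + int (b - a)) = s i" for i
    using equal_values_propagate[OF assms(2,3) \<open>s (int a) = s (int b)\<close>, of "i - int a"]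
      \<open>a < b\<close> by (simp add: algebra_simps)
  then show ?thesis
    using \<open>a < b\<close> by (intro exI[of _ "b - a"]) simp
qed

lemma periodic_if_no_branching:
  fixes X :: "(int \<Rightarrow> 'a::finite) set"
  assumes no_branching: "\<And>u. \<not> branching X k u" and "\<xi> \<in> X"
  shows "periodic \<xi>"
proof -
  define e where "e j = subword \<xi> j (Suc k)" for j
  have edge: "e j \<in> gap_edges X k" for j
    unfolding gap_edges_def e_def using subword_in_dict[OF \<open>\<xi> \<in> X\<close>] by auto
  have vertex: "subword \<xi> j k \<in> gap_vertices X k" for j
    unfolding gap_vertices_def using subword_in_dict[OF \<open>\<xi> \<in> X\<close>] by auto
  have source: "edge_source k (e j) = subword \<xi> j k" for j
    unfolding edge_source_def e_def by (simp add: take_subword)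
  have target: "edge_target (e j) = subword \<xi> (j + 1) k" for j
    unfolding edge_target_def e_def by (rule drop_one_subword)
  have "e (i + 1) = e (j + 1)" if "e i = e j" for i j
  proof (rule unique_edge_from_if_not_branching[OF vertex no_branching edge edge])
    show "edge_source k (e (i + 1)) = subword \<xi> (i + 1) k" by (rule source)
    show "edge_source k (e (j + 1)) = subword \<xi> (i + 1) k"
      using target[of i] target[of j] that source[of "j + 1"] by simp
  qed
  moreover have "e (i - 1) = e (j - 1)" if "e i = e j" for i j
  proof (rule unique_edge_into_if_not_branching[OF vertex no_branching edge edge])
    show "edge_target (e (i - 1)) = subword \<xi> i k"
      using target[of "i - 1"] by simp
    show "edge_target (e (j - 1)) = subword \<xi> i k"
      using target[of "j - 1"] source[of i] source[of j] that by simp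
  qed
  moreover have "finite (range e)"
    using edge by (intro finite_subset[OF _ finite_gap_edges]) auto
  ultimately obtain p :: nat where "p > 0" "\<forall>i. e (i + int p) = e i"
    using periodic_if_finite_range_and_equal_values_propagate[of e] by blast
  then have "\<forall>i. hd (e (i + int p)) = hd (e i)" by simp
  then show ?thesis
    unfolding periodic_iff e_def hd_subword using \<open>p > 0\<close> by blast
qed

theorem corollary6:
  fixes X :: "(int \<Rightarrow> 'a::finite) set"
  assumes "subshift X"
    and "\<exists>\<xi>\<in>X. \<not> periodic \<xi>"
  shows "\<forall>k::nat. \<exists>u. branching X k u"
  using assms(2) periodic_if_no_branching by blast

end
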